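(* Let $\delta(l)\in\Delta(\mathfrak{t})$, let $\psi=\{k_1(z)\delta(l)\}\psi_0\in\mathcal{M}_{\geqslant0}$ with $k_1\in G_{<0}$ and $\varphi=\{k_2(z)\delta(l)\}\varphi_0\in\mathcal{M}_{<0}$ with $k_2\in G_{\geqslant0}$, and set $U_\alpha:=k_1E_\alpha k_1^{-1}$, $W_\beta:=k_2E_\beta z^{-1}k_2^{-1}$ ($1\le\alpha,\beta\le r$). Suppose that for each $m\ge0$ and $1\le\alpha\le r$ there is $M_{m\alpha}\in\pi_{\geqslant0}(\mathrm{gl}_n(R)[z,z^{-1}))$ (a polynomial in $z$) with $\partial_{m\alpha}(\psi)=M_{m\alpha}\psi$ and $\partial_{m\alpha}(\varphi)=M_{m\alpha}\varphi$, and for each $m<0$ and $1\le\beta\le r$ there is $N_{m\beta}\in\pi_{<0}(\mathrm{gl}_n(R)[z^{-1},z))$ (a polynomial in $z^{-1}$ without constant term) with $\partial_{m\beta}(\psi)=N_{m\beta}\psi$ and $\partial_{m\beta}(\varphi)=N_{m\beta}\varphi$. Then $M_{m\alpha}=\pi_{\geqslant0}(U_\alpha z^m)$, $N_{m\beta}=\pi_{<0}(W_\beta z^{m+1})$, and $(\{U_\alpha\},\{W_\beta\})$ is a solution of the combined $(\mathrm{sl}_n(\mathbb{C}),\mathfrak{t})$-hierarchy (i.e. $(\psi,\varphi)$ is a set of wave matrices of type $\delta(l)$).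
   Context: $R$ is a commutative $\mathbb{C}$-algebra with commuting $\mathbb{C}$-linear derivations $\partial_{m\alpha}$, $m\in\mathbb{Z}$, $1\le\alpha\le r$, acting coefficientwise. $\mathrm{gl}_n(R)[z,z^{-1})$: formal series $\sum_{i=-\infty}^{N}X_iz^i$; $\mathrm{gl}_n(R)[z^{-1},z)$: formal series $\sum_{i=-N}^{\infty}X_iz^i$ ($X_i\in\mathrm{gl}_n(R)$); bracket $[X,Y]=\sum[X_i,Y_j]z^{i+j}$; $\pi_{\geqslant0}$ (resp. $\pi_{<0}$) keeps terms with $i\ge0$ (resp. $i<0$). $\mathfrak{t}\subset\mathrm{sl}_n(\mathbb{C})$ is commutative of maximal dimension $r$, basis $E_1,\dots,E_r$, assumed upper triangular. $G_{<0}=\{\mathrm{Id}+\sum_{i\ge1}Y_iz^{-i}\}$, $G_{\geqslant0}=\{X_0+\sum_{i\ge1}X_iz^i\mid X_0\text{ invertible}\}$ (coefficients in $\mathrm{gl}_n(R)$). For $l\in\mathbb{Z}^n$, $\delta(l)=\mathrm{diag}(z^{l_1},\dots,z^{l_n})$, and $\Delta(\mathfrak{t})=\{\delta(l)\mid [\delta(l),E_\alpha]=0\ \forall\alpha\}$. $\psi_0=\varphi_0$ is a formal symbol (standing for $\exp(\sum_{m\in\mathbb{Z}}\sum_\alpha t_{m\alpha}E_\alpha z^m)$). $\mathcal{M}_{\geqslant0}$ is the set of formal products $\{g\}\psi_0$, $g\in\mathrm{gl}_n(R)[z,z^{-1})$, and $\mathcal{M}_{<0}$ the set of formal products $\{h\}\varphi_0$,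 $h\in\mathrm{gl}_n(R)[z^{-1},z)$ (the factors are kept separate). Left action: $k.\{g\}\psi_0=\{kg\}\psi_0$ for $k\in\mathrm{gl}_n(R)[z,z^{-1})$, and $k.\{h\}\varphi_0=\{kh\}\varphi_0$ for $k\in\mathrm{gl}_n(R)[z^{-1},z)$. Derivations: $\partial_{m\alpha}(\{g\}\psi_0)=\{\partial_{m\alpha}(g)+gE_\alpha z^m\}\psi_0$ and $\partial_{m\alpha}(\{h\}\varphi_0)=\{\partial_{m\alpha}(h)+hE_\alpha z^m\}\varphi_0$. Solution of the combined $(\mathrm{sl}_n(\mathbb{C}),\mathfrak{t})$-hierarchy: for all $m\ge0$ and all $\alpha_1,\alpha_2,\beta$: $\partial_{m\alpha_1}(U_{\alpha_2})=[\pi_{\geqslant0}(U_{\alpha_1}z^m),U_{\alpha_2}]$ and $\partial_{m\alpha_1}(W_\beta)=[\pi_{\geqslant0}(U_{\alpha_1}z^m),W_\beta]$; for all $m<0$ and all $\beta_1,\beta_2,\alpha$: $\partial_{m\beta_1}(W_{\beta_2})=[\pi_{<0}(W_{\beta_1}z^{m+1}),W_{\beta_2}]$ and $\partial_{m\beta_1}(U_\alpha)=[\pi_{<0}(W_{\beta_1}z^{m+1}),U_\alpha]$. *)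

theory Defs
  imports "HOL-Analysis.Analysis"
begin

text \<open>Formal Laurent series in z with coefficients in n x n matrices are represented as
  functions int => matrix (coefficient of z^k).  Series in gl_n(R)[z,z^{-1}) are those with
  support bounded above, series in gl_n(R)[z^{-1},z) those with support bounded below.\<close>

type_synonym ('a, 'n) mser = "int \<Rightarrow> 'a^'n^'n"

definition bdd_up :: "('a::zero, 'n::finite) mser \<Rightarrow> bool" where
  "bdd_up X \<longleftrightarrow> (\<exists>N. \<forall>k>N. X k = 0)"

definition bdd_low :: "('a::zero, 'n::finite) mser \<Rightarrow> bool" where
  "bdd_low X \<longleftrightarrow> (\<exists>N. \<forall>k<N. X k = 0)"

text \<open>Product of series: coefficient k is the sum over i of X_i Y_{k-i}; the index set is
  finite whenever both factors lie in the same ring (both bounded above, or both bounded below),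
  or one factor has finite support.\<close>
definition smul :: "('a::semiring_1, 'n::finite) mser \<Rightarrow> ('a, 'n) mser \<Rightarrow> ('a, 'n) mser" where
  "smul X Y = (\<lambda>k. \<Sum>i\<in>{i. X i \<noteq> 0 \<and> Y (k - i) \<noteq> 0}. X i ** Y (k - i))"

definition sadd :: "('a::semiring_1, 'n::finite) mser \<Rightarrow> ('a, 'n) mser \<Rightarrow> ('a, 'n) mser" where
  "sadd X Y = (\<lambda>k. X k + Y k)"

definition sbr :: "('a::comm_ring_1, 'n::finite) mser \<Rightarrow> ('a, 'n) mser \<Rightarrow> ('a, 'n) mser" where
  "sbr X Y = (\<lambda>k. smul X Y k - smul Y X k)"

definition zmono :: "'a::zero^('n::finite)^'n \<Rightarrow> int \<Rightarrow> ('a, 'n) mser" where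
  "zmono A m = (\<lambda>k. if k = m then A else 0)"

definition sone :: "('a::semiring_1, 'n::finite) mser" where
  "sone = zmono (mat 1) 0"

definition zpow :: "('a::semiring_1, 'n::finite) mser \<Rightarrow> int \<Rightarrow> ('a, 'n) mser" where
  "zpow X m = smul X (zmono (mat 1) m)"

definition pi_ge0 :: "('a::zero, 'n::finite) mser \<Rightarrow> ('a, 'n) mser" where
  "pi_ge0 X = (\<lambda>k. if k \<ge> 0 then X k else 0)"

definition pi_lt0 :: "('a::zero, 'n::finite) mser \<Rightarrow> ('a, 'n) mser" where
  "pi_lt0 X = (\<lambda>k. if k < 0 then X k else 0)"

definition inv_up :: "('a::semiring_1, 'n::finite) mser \<Rightarrow> ('a, 'n) mser" where
  "inv_up X = (SOME Y. bdd_up Y \<and> smul X Y = sone \<and> smul Y X = sone)"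

definition inv_low :: "('a::semiring_1, 'n::finite) mser \<Rightarrow> ('a, 'n) mser" where
  "inv_low X = (SOME Y. bdd_low Y \<and> smul X Y = sone \<and> smul Y X = sone)"

definition delta :: "('n::finite \<Rightarrow> int) \<Rightarrow> ('a::zero_neq_one, 'n) mser" where
  "delta l = (\<lambda>k. \<chi> i j. if i = j \<and> l i = k then 1 else 0)"

definition mapM :: "('a \<Rightarrow> 'b) \<Rightarrow> 'a^('n::finite)^'n \<Rightarrow> 'b^'n^'n" where
  "mapM f A = (\<chi> i j. f (A $ i $ j))"

definition mapS :: "('a \<Rightarrow> 'b) \<Rightarrow> ('a, 'n::finite) mser \<Rightarrow> ('b, 'n) mser" where
  "mapS f X = (\<lambda>k. mapM f (X k))"

definition G_neg :: "('a::semiring_1, 'n::finite) mser set" where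
  "G_neg = {k. k 0 = mat 1 \<and> (\<forall>i>0. k i = 0)}"

definition G_nonneg :: "('a::semiring_1, 'n::finite) mser set" where
  "G_nonneg = {k. invertible (k 0) \<and> (\<forall>i<0. k i = 0)}"

text \<open>Polynomials in z (image of pi_{>=0} on gl_n(R)[z,z^{-1})) and polynomials in z^{-1}
  without constant term (image of pi_{<0} on gl_n(R)[z^{-1},z)).\<close>
definition pos_part_ser :: "('a::zero, 'n::finite) mser \<Rightarrow> bool" where
  "pos_part_ser M \<longleftrightarrow> bdd_up M \<and> (\<forall>k<0. M k = 0)"

definition neg_part_ser :: "('a::zero, 'n::finite) mser \<Rightarrow> bool" where
  "neg_part_ser N \<longleftrightarrow> bdd_low N \<and> (\<forall>k\<ge>0. N k = 0)"

definition lincomb :: "(nat \<Rightarrow> complex) \<Rightarrow> (nat \<Rightarrow> complex^('n::finite)^'n) \<Rightarrow> nat \<Rightarrow> complex^'n^'n" where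
  "lincomb c F s = (\<chi> a b. \<Sum>i=1..s. c i * F i $ a $ b)"

definition lin_indep_fam :: "(nat \<Rightarrow> complex^('n::finite)^'n) \<Rightarrow> nat \<Rightarrow> bool" where
  "lin_indep_fam F s \<longleftrightarrow> (\<forall>c. lincomb c F s = 0 \<longrightarrow> (\<forall>i\<in>{1..s}. c i = 0))"

definition comm_sl_fam :: "(nat \<Rightarrow> complex^('n::finite)^'n) \<Rightarrow> nat \<Rightarrow> bool" where
  "comm_sl_fam F s \<longleftrightarrow> (\<forall>i\<in>{1..s}. trace (F i) = 0) \<and>
     (\<forall>i\<in>{1..s}. \<forall>j\<in>{1..s}. F i ** F j = F j ** F i)"

definition max_comm_basis :: "(nat \<Rightarrow> ((complex, 'n::{finite,linorder}) vec, 'n) vec) \<Rightarrow> nat \<Rightarrow> bool" where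
  "max_comm_basis E r \<longleftrightarrow> lin_indep_fam E r \<and> comm_sl_fam E r \<and>
     (\<forall>i\<in>{1..r}. \<forall>a b. b < a \<longrightarrow> E i $ a $ b = 0) \<and>
     (\<forall>(F :: nat \<Rightarrow> ((complex, 'n) vec, 'n) vec) s. lin_indep_fam F s \<and> comm_sl_fam F s \<longrightarrow> s \<le> r)"

definition in_Delta :: "(nat \<Rightarrow> complex^('n::finite)^'n) \<Rightarrow> nat \<Rightarrow> ('n \<Rightarrow> int) \<Rightarrow> bool" where
  "in_Delta E r l \<longleftrightarrow> (\<forall>\<alpha>\<in>{1..r}. sbr (delta l) (zmono (E \<alpha>) 0) = (\<lambda>k. 0))"

definition C_algebra_emb :: "(complex \<Rightarrow> 'r::comm_ring_1) \<Rightarrow> bool" where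
  "C_algebra_emb emb \<longleftrightarrow> emb 1 = 1 \<and> (\<forall>c d. emb (c + d) = emb c + emb d) \<and>
     (\<forall>c d. emb (c * d) = emb c * emb d)"

definition comm_C_derivations :: "(complex \<Rightarrow> 'r::comm_ring_1) \<Rightarrow> (int \<Rightarrow> nat \<Rightarrow> 'r \<Rightarrow> 'r) \<Rightarrow> nat \<Rightarrow> bool" where
  "comm_C_derivations emb D r \<longleftrightarrow>
     (\<forall>m. \<forall>\<alpha>\<in>{1..r}. (\<forall>x y. D m \<alpha> (x + y) = D m \<alpha> x + D m \<alpha> y) \<and>
        (\<forall>x y. D m \<alpha> (x * y) = x * D m \<alpha> y + y * D m \<alpha> x) \<and>
        (\<forall>c x. D m \<alpha> (emb c * x) = emb c * D m \<alpha> x)) \<and>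
     (\<forall>m m'. \<forall>\<alpha>\<in>{1..r}. \<forall>\<beta>\<in>{1..r}. \<forall>x. D m \<alpha> (D m' \<beta> x) = D m' \<beta> (D m \<alpha> x))"

text \<open>Derivation of the wave-matrix coefficient: d({g}psi_0) = {d g + g E_alpha z^m}psi_0;
  the same formula for phi_0.\<close>
definition dwave :: "(complex \<Rightarrow> 'r::comm_ring_1) \<Rightarrow> (int \<Rightarrow> nat \<Rightarrow> 'r \<Rightarrow> 'r) \<Rightarrow>
     (nat \<Rightarrow> complex^('n::finite)^'n) \<Rightarrow> int \<Rightarrow> nat \<Rightarrow> ('r, 'n) mser \<Rightarrow> ('r, 'n) mser" where
  "dwave emb D E m \<alpha> g = sadd (mapS (D m \<alpha>) g) (smul g (zmono (mapM emb (E \<alpha>)) m))"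

definition combined_hierarchy_solution :: "(int \<Rightarrow> nat \<Rightarrow> 'r::comm_ring_1 \<Rightarrow> 'r) \<Rightarrow> nat \<Rightarrow>
     (nat \<Rightarrow> ('r, 'n::finite) mser) \<Rightarrow> (nat \<Rightarrow> ('r, 'n) mser) \<Rightarrow> bool" where
  "combined_hierarchy_solution D r U W \<longleftrightarrow>
     (\<forall>m\<ge>0. \<forall>\<alpha>1\<in>{1..r}. \<forall>\<alpha>2\<in>{1..r}. \<forall>\<beta>\<in>{1..r}.
        mapS (D m \<alpha>1) (U \<alpha>2) = sbr (pi_ge0 (zpow (U \<alpha>1) m)) (U \<alpha>2) \<and>
        mapS (D m \<alpha>1) (W \<beta>) = sbr (pi_ge0 (zpow (U \<alpha>1) m)) (W \<beta>)) \<and>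
     (\<forall>m<0. \<forall>\<beta>1\<in>{1..r}. \<forall>\<beta>2\<in>{1..r}. \<forall>\<alpha>\<in>{1..r}.
        mapS (D m \<beta>1) (W \<beta>2) = sbr (pi_lt0 (zpow (W \<beta>1) (m + 1))) (W \<beta>2) \<and>
        mapS (D m \<beta>1) (U \<alpha>) = sbr (pi_lt0 (zpow (W \<beta>1) (m + 1))) (U \<alpha>))"

end

theory Submission
  imports Defs "HOL-Library.Function_Algebras"
begin

text \<open>Write \<psi> = k1 \<delta>(l) \<psi>0 and \<phi> = k2 \<delta>(l) \<phi>0. Because \<delta>(l) is invertible and commutes with
  every E\<alpha>, the wave equation \<partial>\<psi> = M \<psi> reduces to \<partial>k1 + k1 E\<alpha> z^m = M k1, i.e.
  M = \<partial>k1 k1^-1 + U\<alpha> z^m, and likewise M = \<partial>k2 k2^-1 + W\<alpha> z^(m+1). For k1 in G_neg the term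
  \<partial>k1 k1^-1 contains only negative powers of z, so a polynomial M equals \<pi>_\<ge>0(U\<alpha> z^m); dually
  N = \<pi>_<0(W\<beta> z^(m+1)). Finally, for a dressed matrix k C k^-1 with \<partial>C = 0 one has
  \<partial>(k C k^-1) = [\<partial>k k^-1, k C k^-1], and \<partial>k k^-1 differs from M only by a dressed matrix
  commuting with k C k^-1 (the E\<alpha> commute), which yields the hierarchy equations.\<close>

section \<open>Products of matrix Laurent series\<close>

lemma matrix_add_rdistrib: "((A::'a::semiring_1^'n^'m) + B) ** C = A ** C + B ** C"
  by (vector matrix_matrix_mult_def sum.distrib[symmetric] field_simps)

lemma matrix_mul_sum_left: "(\<Sum>i\<in>S. f i) ** (C::'a::semiring_1^'p^'n) = (\<Sum>i\<in>S. f i ** C)"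
  by (induct S rule: infinite_finite_induct) (auto simp: matrix_add_rdistrib)

lemma matrix_mul_sum_right: "(C::'a::semiring_1^'n^'m) ** (\<Sum>i\<in>S. f i) = (\<Sum>i\<in>S. C ** f i)"
  by (induct S rule: infinite_finite_induct) (auto simp: matrix_add_ldistrib)

lemma matrix_mul_uminus_right: "(A::'a::ring_1^'n^'m) ** (- B) = - (A ** B)"
  by (vector matrix_matrix_mult_def sum_negf)

definition smul_finite :: "('a::semiring_1, 'n::finite) mser \<Rightarrow> ('a, 'n) mser \<Rightarrow> bool" where
  "smul_finite X Y \<longleftrightarrow> (\<forall>k. finite {i. X i \<noteq> 0 \<and> Y (k - i) \<noteq> 0})"

lemma smul_eq_sum:
  assumes "finite A" "\<And>i. X i \<noteq> 0 \<Longrightarrow> Y (k - i) \<noteq> 0 \<Longrightarrow> i \<in> A"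
  shows "smul X Y k = (\<Sum>i\<in>A. X i ** Y (k - i))"
  unfolding smul_def by (rule sum.mono_neutral_left) (use assms in auto)

lemma smul_eq_0:
  assumes "\<And>i. X i \<noteq> 0 \<Longrightarrow> Y (k - i) \<noteq> 0 \<Longrightarrow> False"
  shows "smul X Y k = 0"
  using smul_eq_sum[of "{}" X Y k] assms by auto

lemma smul_zmono_right: "smul X (zmono A m) = (\<lambda>k. X (k - m) ** A)"
proof
  show "smul X (zmono A m) k = X (k - m) ** A" for k
    by (subst smul_eq_sum[of "{k - m}"]) (auto simp: zmono_def split: if_splits)
qed

lemma smul_zmono_left: "smul (zmono A m) X = (\<lambda>k. A ** X (k - m))"
proof
  show "smul (zmono A m) X k = A ** X (k - m)" for k
    by (subst smul_eq_sum[of "{m}"]) (auto simp: zmono_def split: if_splits)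
qed

lemma smul_sone_right [simp]: "smul X sone = X"
  by (simp add: sone_def smul_zmono_right)

lemma smul_sone_left [simp]: "smul sone X = X"
  by (simp add: sone_def smul_zmono_left)

lemma smul_zero_right [simp]: "smul X 0 = 0"
  by (simp add: smul_def fun_eq_iff)

lemma smul_zmono_zmono: "smul (zmono A m) (zmono B m') = zmono (A ** B) (m + m')"
  unfolding smul_zmono_left by (auto simp: zmono_def fun_eq_iff)

lemma zmono_commute_iff:
  "smul (zmono A m) X = smul X (zmono A m) \<longleftrightarrow> (\<forall>k. A ** X k = X k ** A)"
  unfolding smul_zmono_left smul_zmono_right fun_eq_iff
  by (metis add_diff_cancel_right')

lemma sadd_eq_plus: "sadd X Y = X + Y"
  by (simp add: sadd_def fun_eq_iff)

lemma sone_apply: "sone k = (if k = 0 then mat 1 else 0)"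
  by (simp add: sone_def zmono_def)

lemma smul_add_left:
  assumes "smul_finite X Z" "smul_finite Y Z"
  shows "smul (X + Y) Z = smul X Z + smul Y Z"
proof
  fix k
  let ?A = "{i. X i \<noteq> 0 \<and> Z (k - i) \<noteq> 0} \<union> {i. Y i \<noteq> 0 \<and> Z (k - i) \<noteq> 0}"
  have fin: "finite ?A" using assms by (auto simp: smul_finite_def)
  have s: "smul V Z k = (\<Sum>i\<in>?A. V i ** Z (k - i))" if "\<And>i. V i \<noteq> 0 \<Longrightarrow> X i \<noteq> 0 \<or> Y i \<noteq> 0" for V
    using fin by (rule smul_eq_sum) (use that in auto)
  show "smul (X + Y) Z k = (smul X Z + smul Y Z) k"
    unfolding plus_fun_apply by (subst (1 2 3) s) (auto simp: matrix_add_rdistrib sum.distrib)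
qed

lemma smul_add_right:
  assumes "smul_finite X Y" "smul_finite X Z"
  shows "smul X (Y + Z) = smul X Y + smul X Z"
proof
  fix k
  let ?A = "{i. X i \<noteq> 0 \<and> Y (k - i) \<noteq> 0} \<union> {i. X i \<noteq> 0 \<and> Z (k - i) \<noteq> 0}"
  have fin: "finite ?A" using assms by (auto simp: smul_finite_def)
  have s: "smul X V k = (\<Sum>i\<in>?A. X i ** V (k - i))" if "\<And>j. V j \<noteq> 0 \<Longrightarrow> Y j \<noteq> 0 \<or> Z j \<noteq> 0" for V
    using fin by (rule smul_eq_sum) (use that in auto)
  show "smul X (Y + Z) k = (smul X Y + smul X Z) k"
    unfolding plus_fun_apply by (subst (1 2 3) s) (auto simp: matrix_add_ldistrib sum.distrib)
qed

lemma smul_uminus_right: "smul X (- Y::('a::ring_1, 'n::finite) mser) = - smul X Y"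
  by (auto simp: smul_def fun_eq_iff matrix_mul_uminus_right sum_negf)

lemma smul_eq_0_above:
  assumes "\<forall>i>a. X i = 0" "\<forall>j>b. Y j = 0" "p > a + b"
  shows "smul X Y p = 0"
proof (rule smul_eq_0)
  fix i assume "X i \<noteq> 0" "Y (p - i) \<noteq> 0"
  then have "i \<le> a" "p - i \<le> b" using assms(1,2) by (meson not_less)+
  then show False using assms(3) by linarith
qed

lemma smul_eq_0_below:
  assumes "\<forall>i<a. X i = 0" "\<forall>j<b. Y j = 0" "p < a + b"
  shows "smul X Y p = 0"
proof (rule smul_eq_0)
  fix i assume "X i \<noteq> 0" "Y (p - i) \<noteq> 0"
  then have "i \<ge> a" "p - i \<ge> b" using assms(1,2) by (meson not_less)+
  then show False using assms(3) by linarith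
qed

lemma bdd_up_smul_finite:
  assumes "bdd_up X" "bdd_up Y"
  shows "smul_finite X Y"
proof -
  obtain a b where a: "\<forall>i>a. X i = 0" and b: "\<forall>j>b. Y j = 0"
    using assms by (auto simp: bdd_up_def)
  have "{i. X i \<noteq> 0 \<and> Y (k - i) \<noteq> 0} \<subseteq> {k - b..a}" for k
    using a b by (auto simp: not_less[symmetric])
  then show ?thesis unfolding smul_finite_def by (meson finite_atLeastAtMost_int finite_subset)
qed

lemma bdd_up_smul: "bdd_up X \<Longrightarrow> bdd_up Y \<Longrightarrow> bdd_up (smul X Y)"
  using smul_eq_0_above unfolding bdd_up_def by blast

lemma bdd_up_smul_assoc:
  fixes X Y Z :: "('a::semiring_1, 'n::finite) mser"
  assumes "bdd_up X" "bdd_up Y" "bdd_up Z"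
  shows "smul (smul X Y) Z = smul X (smul Y Z)"
proof
  fix k
  obtain a b c where a: "\<forall>i>a. X i = 0" and b: "\<forall>j>b. Y j = 0" and c: "\<forall>j>c. Z j = 0"
    using assms by (auto simp: bdd_up_def)
  have XY: "smul X Y p = 0" if "p > a + b" for p using smul_eq_0_above[OF a b that] .
  have YZ: "smul Y Z p = 0" if "p > b + c" for p using smul_eq_0_above[OF b c that] .
  define S where "S = {k - c..a + b}"
  define T where "T = {k - b - c..a}"
  have "smul (smul X Y) Z k = (\<Sum>p\<in>S. smul X Y p ** Z (k - p))"
    by (rule smul_eq_sum) (use XY c in \<open>auto simp: S_def not_less[symmetric]\<close>)
  also have "\<dots> = (\<Sum>p\<in>S. (\<Sum>i\<in>T. X i ** Y (p - i)) ** Z (k - p))"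
    by (intro sum.cong refl arg_cong2[where f="(**)"] smul_eq_sum)
       (use a b in \<open>auto simp: S_def T_def not_less[symmetric]\<close>)
  also have "\<dots> = (\<Sum>i\<in>T. \<Sum>p\<in>S. X i ** (Y (p - i) ** Z (k - p)))"
    by (simp add: matrix_mul_sum_left matrix_mul_assoc sum.swap[of _ S])
  also have "\<dots> = (\<Sum>i\<in>T. X i ** smul Y Z (k - i))"
  proof (rule sum.cong[OF refl])
    fix i assume "i \<in> T"
    have "smul Y Z (k - i) = (\<Sum>j\<in>(\<lambda>p. p - i) ` S. Y j ** Z (k - i - j))"
      by (rule smul_eq_sum) (use \<open>i \<in> T\<close> b c in
          \<open>auto simp: S_def T_def not_less[symmetric] image_iff intro!: bexI[where x="i + _"]\<close>)
    also have "\<dots> = (\<Sum>p\<in>S. Y (p - i) ** Z (k - p))"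
      by (subst sum.reindex) (auto simp: inj_on_def)
    finally show "(\<Sum>p\<in>S. X i ** (Y (p - i) ** Z (k - p))) = X i ** smul Y Z (k - i)"
      by (simp add: matrix_mul_sum_right)
  qed
  also have "\<dots> = smul X (smul Y Z) k"
    by (rule smul_eq_sum[symmetric]) (use a YZ in \<open>auto simp: T_def not_less[symmetric]\<close>)
  finally show "smul (smul X Y) Z k = smul X (smul Y Z) k" .
qed

definition reflect :: "('a, 'n::finite) mser \<Rightarrow> ('a, 'n) mser" where
  "reflect X = (\<lambda>k. X (- k))"

lemma reflect_reflect [simp]: "reflect (reflect X) = X"
  by (simp add: reflect_def)

lemma reflect_sone [simp]: "reflect sone = sone"
  by (auto simp: reflect_def sone_def zmono_def)

lemma reflect_add: "reflect (X + Y) = reflect X + reflect Y"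
  by (simp add: reflect_def fun_eq_iff)

lemma Collect_uminus_eq_image: "{i::int. P (- i)} = uminus ` {j. P j}"
proof (intro set_eqI iffI)
  fix x assume "x \<in> {i. P (- i)}"
  then show "x \<in> uminus ` {j. P j}" by (intro image_eqI[of x uminus "- x"]) simp_all
qed auto

lemma reflect_smul: "smul (reflect X) (reflect Y) = reflect (smul X Y)"
proof
  fix k
  have "smul (reflect X) (reflect Y) k =
      (\<Sum>i\<in>uminus ` {j. X j \<noteq> 0 \<and> Y (- k - j) \<noteq> 0}. X (- i) ** Y (i - k))"
    unfolding smul_def reflect_def using Collect_uminus_eq_image[of "\<lambda>i. X i \<noteq> 0 \<and> Y (- k - i) \<noteq> 0"]
    by simp
  also have "\<dots> = reflect (smul X Y) k"
  proof -
    have e: "- j - k = - k - j" for j by simp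
    show ?thesis
      by (simp add: sum.reindex reflect_def smul_def) (intro sum.cong refl, simp only: e)
  qed
  finally show "smul (reflect X) (reflect Y) k = reflect (smul X Y) k" .
qed

lemma smul_finite_reflect: "smul_finite (reflect X) (reflect Y) \<longleftrightarrow> smul_finite X Y"
proof -
  have "smul_finite (reflect X) (reflect Y) \<longleftrightarrow> (\<forall>k. finite {j. X j \<noteq> 0 \<and> Y (- k - j) \<noteq> 0})"
    using Collect_uminus_eq_image[of "\<lambda>i. X i \<noteq> 0 \<and> Y (- _ - i) \<noteq> 0"]
    by (simp add: smul_finite_def reflect_def finite_image_iff)
  also have "\<dots> \<longleftrightarrow> smul_finite X Y"
    unfolding smul_finite_def
  proof (intro iffI allI)
    show "finite {i. X i \<noteq> 0 \<and> Y (k - i) \<noteq> 0}"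
      if "\<forall>k. finite {j. X j \<noteq> 0 \<and> Y (- k - j) \<noteq> 0}" for k
      using that[rule_format, of "- k"] by simp
    show "finite {j. X j \<noteq> 0 \<and> Y (- k - j) \<noteq> 0}"
      if "\<forall>k. finite {i. X i \<noteq> 0 \<and> Y (k - i) \<noteq> 0}" for k
      using that by blast
  qed
  finally show ?thesis .
qed

lemma bdd_low_eq_bdd_up_reflect: "bdd_low = (\<lambda>X::('a::zero, 'n::finite) mser. bdd_up (reflect X))"
proof
  fix X :: "('a, 'n) mser"
  have "(\<exists>N. \<forall>k<N. X k = 0) \<longleftrightarrow> (\<exists>N. \<forall>k>N. X (- k) = 0)"
  proof
    assume "\<exists>N. \<forall>k<N. X k = 0"
    then obtain N where "\<forall>k<N. X k = 0" by blast
    then show "\<exists>N. \<forall>k>N. X (- k) = 0" by (intro exI[of _ "- N"]) auto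
  next
    assume "\<exists>N. \<forall>k>N. X (- k) = 0"
    then obtain N where N: "\<forall>k>N. X (- k) = 0" by blast
    have "X k = 0" if "k < - N" for k using N[rule_format, of "- k"] that by simp
    then show "\<exists>N. \<forall>k<N. X k = 0" by blast
  qed
  then show "bdd_low X = bdd_up (reflect X)"
    by (simp add: bdd_low_def bdd_up_def reflect_def)
qed

section \<open>Rings of Laurent series\<close>

locale series_ring =
  fixes P :: "('a::comm_ring_1, 'n::finite) mser \<Rightarrow> bool"
  assumes finite_support: "finite {k. X k \<noteq> 0} \<Longrightarrow> P X"
    and support_subset: "P X \<Longrightarrow> (\<And>k. X k = 0 \<Longrightarrow> Y k = 0) \<Longrightarrow> P Y"
    and add_closed [simp]: "P X \<Longrightarrow> P Y \<Longrightarrow> P (X + Y)"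
    and smul_closed [simp]: "P X \<Longrightarrow> P Y \<Longrightarrow> P (smul X Y)"
    and smul_finite: "P X \<Longrightarrow> P Y \<Longrightarrow> smul_finite X Y"
    and smul_assoc: "P X \<Longrightarrow> P Y \<Longrightarrow> P Z \<Longrightarrow> smul (smul X Y) Z = smul X (smul Y Z)"
begin

lemma zmono_closed [simp]: "P (zmono A m)"
  by (rule finite_support) (simp add: zmono_def)

lemma sone_closed [simp]: "P sone"
  by (simp add: sone_def)

lemma delta_closed [simp]: "P (delta l)"
proof (rule finite_support)
  have "{k. delta l k \<noteq> 0} \<subseteq> range l"
    by (auto simp: delta_def vec_eq_iff split: if_splits)
  then show "finite {k. delta l k \<noteq> 0}" by (rule finite_subset) simp
qed

lemma mapS_closed [simp]: "f 0 = 0 \<Longrightarrow> P X \<Longrightarrow> P (mapS f X)"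
  by (erule support_subset) (simp add: mapS_def mapM_def vec_eq_iff)

lemma smul_inverse_cancel:
  assumes "P K" "P Y" "P Z" "smul K Y = sone"
  shows "smul K (smul Y Z) = Z"
  using smul_assoc[of K Y Z] assms by simp

lemma right_inverse_eq_left_inverse:
  assumes "P K" "P Y" "P Z" "smul K Y = sone" "smul Z K = sone"
  shows "Y = Z"
  using smul_assoc[of Z K Y] assms by simp

end

lemma series_ring_reflect:
  assumes "series_ring P"
  shows "series_ring (\<lambda>X. P (reflect X))"
proof -
  interpret series_ring P by (fact assms)
  show ?thesis
  proof
    fix X Y Z :: "('a, 'b) mser"
    show "P (reflect X)" if "finite {k. X k \<noteq> 0}"
    proof (rule finite_support)
      have "{k. reflect X k \<noteq> 0} = uminus ` {k. X k \<noteq> 0}"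
        using Collect_uminus_eq_image[of "\<lambda>k. X k \<noteq> 0"] by (simp add: reflect_def)
      then show "finite {k. reflect X k \<noteq> 0}" using that by simp
    qed
    show "P (reflect Y)" if "P (reflect X)" "\<And>k. X k = 0 \<Longrightarrow> Y k = 0"
      using that by (auto simp: reflect_def intro: support_subset)
    show "P (reflect (X + Y))" if "P (reflect X)" "P (reflect Y)"
      using that by (simp add: reflect_add)
    show "P (reflect (smul X Y))" if "P (reflect X)" "P (reflect Y)"
      using that by (simp flip: reflect_smul)
    show "smul_finite X Y" if "P (reflect X)" "P (reflect Y)"
      using smul_finite[OF that] by (simp add: smul_finite_reflect)
    show "smul (smul X Y) Z = smul X (smul Y Z)"
      if "P (reflect X)" "P (reflect Y)" "P (reflect Z)"
      using smul_assoc[OF that] by (metis reflect_reflect reflect_smul)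
  qed
qed

interpretation up: series_ring "bdd_up :: ('a::comm_ring_1, 'n::finite) mser \<Rightarrow> bool"
proof
  fix X Y Z :: "('a, 'n) mser"
  show "bdd_up X" if "finite {k. X k \<noteq> 0}"
    unfolding bdd_up_def using that by (intro exI[of _ "Max {k. X k \<noteq> 0}"]) (auto dest: Max_ge)
  show "bdd_up Y" if "bdd_up X" "\<And>k. X k = 0 \<Longrightarrow> Y k = 0"
    using that by (auto simp: bdd_up_def)
  show "bdd_up (X + Y)" if XY: "bdd_up X" "bdd_up Y"
  proof -
    obtain a b where "\<forall>k>a. X k = 0" "\<forall>k>b. Y k = 0" using XY by (auto simp: bdd_up_def)
    then show ?thesis unfolding bdd_up_def by (intro exI[of _ "max a b"]) auto
  qed
qed (simp_all add: bdd_up_smul bdd_up_smul_finite bdd_up_smul_assoc)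

interpretation low: series_ring "bdd_low :: ('a::comm_ring_1, 'n::finite) mser \<Rightarrow> bool"
  unfolding bdd_low_eq_bdd_up_reflect by (rule series_ring_reflect, rule up.series_ring_axioms)

section \<open>Inverses in G_neg and G_nonneg\<close>

lemma inv_up_eqI:
  fixes K Y :: "('a::comm_ring_1, 'n::finite) mser"
  assumes "bdd_up K" "bdd_up Y" "smul K Y = sone" "smul Y K = sone"
  shows "inv_up K = Y"
proof -
  have "bdd_up (inv_up K) \<and> smul K (inv_up K) = sone \<and> smul (inv_up K) K = sone"
    unfolding inv_up_def by (rule someI[of _ Y]) (use assms in auto)
  then show ?thesis using up.right_inverse_eq_left_inverse[of K "inv_up K" Y] assms by auto
qed

lemma inv_low_eqI:
  fixes K Y :: "('a::comm_ring_1, 'n::finite) mser"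
  assumes "bdd_low K" "bdd_low Y" "smul K Y = sone" "smul Y K = sone"
  shows "inv_low K = Y"
proof -
  have "bdd_low (inv_low K) \<and> smul K (inv_low K) = sone \<and> smul (inv_low K) K = sone"
    unfolding inv_low_def by (rule someI[of _ Y]) (use assms in auto)
  then show ?thesis using low.right_inverse_eq_left_inverse[of K "inv_low K" Y] assms by auto
qed

function right_inverse_coeff :: "('a::ring_1, 'n::finite) mser \<Rightarrow> 'a^'n^'n \<Rightarrow> nat \<Rightarrow> 'a^'n^'n" where
  "right_inverse_coeff K a n =
     (if n = 0 then a else - (a ** (\<Sum>i\<in>{1..n}. K (int i) ** right_inverse_coeff K a (n - i))))"
  by auto
termination by (relation "Wellfounded.measure (\<lambda>(K, a, n). n)") auto

declare right_inverse_coeff.simps [simp del]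

lemma right_inverse_coeff_convolution:
  assumes "K 0 ** a = mat 1"
  shows "(\<Sum>i\<in>{0..n}. K (int i) ** right_inverse_coeff K a (n - i)) = (if n = 0 then mat 1 else 0)"
proof (cases "n = 0")
  case True
  then show ?thesis using assms by (simp add: right_inverse_coeff.simps)
next
  case False
  let ?S = "\<Sum>i\<in>{1..n}. K (int i) ** right_inverse_coeff K a (n - i)"
  have "K 0 ** right_inverse_coeff K a n = - ?S"
    using False assms
    by (subst right_inverse_coeff.simps) (simp add: matrix_mul_uminus_right matrix_mul_assoc)
  then show ?thesis using False by (simp add: sum.atLeast_Suc_atMost)
qed

lemma smul_nonneg_apply:
  assumes "\<forall>i<0. X i = 0" "\<forall>i<0. Y i = 0"
  shows "smul X Y (int n) = (\<Sum>i\<in>{0..n}. X (int i) ** Y (int n - int i))"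
proof -
  have "smul X Y (int n) = (\<Sum>i\<in>int ` {0..n}. X i ** Y (int n - i))"
    by (rule smul_eq_sum)
       (use assms in \<open>auto simp: image_iff not_less[symmetric] intro!: bexI[of _ "nat _"]\<close>)
  then show ?thesis by (simp add: sum.reindex)
qed

lemma nonneg_right_inverse:
  fixes K :: "('a::ring_1, 'n::finite) mser"
  assumes K: "\<forall>i<0. K i = 0" and a: "K 0 ** a = mat 1"
  shows "\<exists>Y. (\<forall>i<0. Y i = 0) \<and> Y 0 = a \<and> smul K Y = sone"
proof (intro exI conjI)
  define Y where "Y = (\<lambda>j. if j \<ge> 0 then right_inverse_coeff K a (nat j) else 0)"
  show Y0: "\<forall>i<0. Y i = 0" by (simp add: Y_def)
  show "Y 0 = a" by (simp add: Y_def right_inverse_coeff.simps)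
  show "smul K Y = sone"
  proof
    fix p
    show "smul K Y p = sone p"
    proof (cases "p < 0")
      case True
      then show ?thesis using smul_eq_0_below[OF K Y0, of p] by (simp add: sone_apply)
    next
      case False
      then obtain n where p: "p = int n" by (metis nonneg_int_cases not_less)
      have "smul K Y p = (\<Sum>i\<in>{0..n}. K (int i) ** right_inverse_coeff K a (n - i))"
        unfolding p smul_nonneg_apply[OF K Y0] by (intro sum.cong) (auto simp: Y_def nat_diff_distrib)
      then show ?thesis using right_inverse_coeff_convolution[of K a n, OF a] p by (simp add: sone_apply)
    qed
  qed
qed

lemma G_nonneg_inverse:
  fixes K :: "('a::comm_ring_1, 'n::finite) mser"
  assumes "K \<in> G_nonneg"
  shows "\<exists>Y. (\<forall>i<0. Y i = 0) \<and> smul K Y = sone \<and> smul Y K = sone"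
proof -
  have K: "\<forall>i<0. K i = 0" and "invertible (K 0)" using assms by (auto simp: G_nonneg_def)
  then obtain a where a: "K 0 ** a = mat 1" "a ** K 0 = mat 1" by (auto simp: invertible_def)
  obtain Y where Y: "\<forall>i<0. Y i = 0" "Y 0 = a" "smul K Y = sone"
    using nonneg_right_inverse[OF K a(1)] by blast
  \<comment> \<open>a right inverse of Y must be K, so Y is also a left inverse of K\<close>
  obtain Z where Z: "\<forall>i<0. Z i = 0" "smul Y Z = sone"
    using nonneg_right_inverse[of Y "K 0"] Y(1,2) a(2) by blast
  have "bdd_low K" "bdd_low Y" "bdd_low Z" using K Y(1) Z(1) by (auto simp: bdd_low_def)
  then have "Z = K" using low.right_inverse_eq_left_inverse[of Y Z K] Y(3) Z(2) by simp
  then show ?thesis using Y Z by blast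
qed

lemma G_neg_inverse:
  fixes K :: "('a::comm_ring_1, 'n::finite) mser"
  assumes "K \<in> G_neg"
  shows "\<exists>Y. (\<forall>i>0. Y i = 0) \<and> smul K Y = sone \<and> smul Y K = sone"
proof -
  have "reflect K \<in> G_nonneg"
    using assms by (auto simp: G_neg_def G_nonneg_def reflect_def invertible_def)
  then obtain Y where Y: "\<forall>i<0. Y i = 0" "smul (reflect K) Y = sone" "smul Y (reflect K) = sone"
    using G_nonneg_inverse by blast
  have "smul K (reflect Y) = sone" "smul (reflect Y) K = sone"
    using reflect_smul[of K "reflect Y"] reflect_smul[of "reflect Y" K] Y(2,3)
    by (metis reflect_reflect reflect_sone)+
  moreover have "\<forall>i>0. reflect Y i = 0" using Y(1) by (simp add: reflect_def)
  ultimately show ?thesis by blast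
qed

lemma matrix_mul_delta_apply:
  "(A ** delta l q) $ i $ j = (if l j = q then A $ i $ j else (0::'a::semiring_1))"
proof -
  have "(A ** delta l q) $ i $ j = (\<Sum>k\<in>UNIV. A $ i $ k * (if k = j \<and> l k = q then 1 else 0))"
    by (simp add: matrix_matrix_mult_def delta_def)
  also have "\<dots> = (\<Sum>k\<in>UNIV. if k = j then (if l j = q then A $ i $ j else 0) else 0)"
    by (intro sum.cong) auto
  finally show ?thesis by simp
qed

lemma smul_delta_apply: "smul V (delta l) p $ i $ j = V (p - l j) $ i $ j"
proof -
  have "smul V (delta l) p = (\<Sum>q\<in>range (\<lambda>j. p - l j). V q ** delta l (p - q))"
  proof (rule smul_eq_sum)
    fix q assume "delta l (p - q) \<noteq> 0"
    then obtain k where "l k = p - q" by (auto simp: delta_def vec_eq_iff split: if_splits)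
    then show "q \<in> range (\<lambda>j. p - l j)" by (intro image_eqI[of _ _ k]) simp_all
  qed simp
  also have "\<dots> $ i $ j = (\<Sum>q\<in>range (\<lambda>j. p - l j). if q = p - l j then V q $ i $ j else 0)"
    by (simp add: sum_component matrix_mul_delta_apply eq_diff_eq ac_simps)
  also have "\<dots> = V (p - l j) $ i $ j"
    by (simp add: sum.delta')
  finally show ?thesis .
qed

lemma smul_delta_cancel:
  assumes "smul V (delta l) = smul W (delta l)"
  shows "V = W"
proof (intro ext vec_eq_iff[THEN iffD2] allI)
  fix q i j
  have "smul V (delta l) (q + l j) $ i $ j = smul W (delta l) (q + l j) $ i $ j" using assms by simp
  then show "V q $ i $ j = W q $ i $ j" by (simp add: smul_delta_apply)
qed

section \<open>Derivations\<close>

definition derivation :: "('a::comm_ring_1 \<Rightarrow> 'a) \<Rightarrow> bool" where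
  "derivation f \<longleftrightarrow> (\<forall>x y. f (x + y) = f x + f y) \<and> (\<forall>x y. f (x * y) = x * f y + y * f x)"

lemma derivation_add: "derivation f \<Longrightarrow> f (x + y) = f x + f y"
  by (simp add: derivation_def)

lemma derivation_mult: "derivation f \<Longrightarrow> f (x * y) = x * f y + y * f x"
  by (simp add: derivation_def)

lemma derivation_zero: "derivation f \<Longrightarrow> f 0 = 0"
  using derivation_add[of f 0 0] by simp

lemma derivation_one: "derivation f \<Longrightarrow> f 1 = 0"
  using derivation_mult[of f 1 1] by simp

lemma derivation_sum: "derivation f \<Longrightarrow> f (sum g A) = (\<Sum>a\<in>A. f (g a))"
  by (induct A rule: infinite_finite_induct) (simp_all add: derivation_zero derivation_add)

lemma mapM_derivation_mult:
  assumes "derivation f"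
  shows "mapM f (A ** B) = mapM f A ** B + A ** mapM f B"
  using assms
  by (simp add: mapM_def vec_eq_iff matrix_matrix_mult_def derivation_sum derivation_mult
      sum.distrib[symmetric] add.commute mult.commute)

lemma mapM_derivation_sum: "derivation f \<Longrightarrow> mapM f (sum g A) = (\<Sum>a\<in>A. mapM f (g a))"
  by (simp add: mapM_def vec_eq_iff sum_component derivation_sum)

lemma mapM_derivation_mat: "derivation f \<Longrightarrow> mapM f (mat c) = mat (f c)"
  by (simp add: mapM_def mat_def vec_eq_iff derivation_zero)

lemma mapS_derivation_smul:
  assumes f: "derivation f" and "smul_finite X Y"
  shows "mapS f (smul X Y) = smul (mapS f X) Y + smul X (mapS f Y)"
proof
  fix k
  let ?A = "{i. X i \<noteq> 0 \<and> Y (k - i) \<noteq> 0}"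
  have fin: "finite ?A" using assms by (auto simp: smul_finite_def)
  have nz: "A \<noteq> 0" if "mapM f A \<noteq> 0" for A :: "'a^'n^'n"
    using that f by (force simp: mapM_def vec_eq_iff derivation_zero)
  have "mapS f (smul X Y) k = (\<Sum>i\<in>?A. mapM f (X i) ** Y (k - i) + X i ** mapM f (Y (k - i)))"
    by (simp add: mapS_def smul_def mapM_derivation_sum[OF f] mapM_derivation_mult[OF f])
  also have "\<dots> = smul (mapS f X) Y k + smul X (mapS f Y) k"
    by (simp add: sum.distrib smul_eq_sum[OF fin] mapS_def nz)
  finally show "mapS f (smul X Y) k = (smul (mapS f X) Y + smul X (mapS f Y)) k" by simp
qed

lemma mapM_zero: "f 0 = 0 \<Longrightarrow> mapM f 0 = 0"
  by (simp add: mapM_def vec_eq_iff)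

lemma mapS_zmono: "f 0 = 0 \<Longrightarrow> mapS f (zmono A m) = zmono (mapM f A) m"
  by (simp add: mapS_def zmono_def fun_eq_iff mapM_def vec_eq_iff)

lemma zmono_0 [simp]: "zmono 0 m = 0"
  by (simp add: zmono_def fun_eq_iff)

lemma mapS_derivation_sone: "derivation f \<Longrightarrow> mapS f sone = 0"
  by (simp add: sone_def mapS_zmono mapM_derivation_mat derivation_zero derivation_one)

lemma mapS_derivation_delta: "derivation f \<Longrightarrow> mapS f (delta l) = 0"
  by (simp add: mapS_def delta_def fun_eq_iff mapM_def vec_eq_iff derivation_zero derivation_one)

lemma C_algebra_emb_zero: "C_algebra_emb g \<Longrightarrow> g 0 = 0"
  unfolding C_algebra_emb_def by (metis add_cancel_right_right add_0)

lemma C_algebra_emb_sum: "C_algebra_emb g \<Longrightarrow> g (sum h A) = (\<Sum>a\<in>A. g (h a))"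
  by (induct A rule: infinite_finite_induct) (simp_all add: C_algebra_emb_zero C_algebra_emb_def)

lemma mapM_C_algebra_emb_mult:
  "C_algebra_emb g \<Longrightarrow> mapM g (A ** B) = mapM g A ** mapM g B"
  by (simp add: mapM_def vec_eq_iff matrix_matrix_mult_def C_algebra_emb_sum)
     (simp add: C_algebra_emb_def)

lemma mapM_C_algebra_emb_delta: "C_algebra_emb g \<Longrightarrow> mapM g (delta l q) = delta l q"
  by (simp add: mapM_def delta_def vec_eq_iff C_algebra_emb_zero) (simp add: C_algebra_emb_def)

lemma mapS_derivation_constant:
  assumes "derivation f" "\<forall>c x. f (g c * x) = g c * f x"
  shows "mapS f (zmono (mapM g A) m) = 0"
proof -
  have "f (g c) = 0" for c
    using assms(2)[rule_format, of c 1] derivation_one[OF assms(1)] by simp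
  then have "mapM f (mapM g A) = 0"
    by (simp add: mapM_def vec_eq_iff)
  then show ?thesis
    by (simp add: mapS_zmono derivation_zero[OF assms(1)])
qed

section \<open>Dressing\<close>

context series_ring
begin

lemma mapS_conjugate_eq_sbr:
  assumes k: "P k" "P ki" "smul k ki = sone" "smul ki k = sone"
    and C: "P C" "mapS f C = 0" and f: "derivation f"
  shows "mapS f (smul (smul k C) ki) = sbr (smul (mapS f k) ki) (smul (smul k C) ki)"
proof -
  let ?A = "smul (mapS f k) ki" and ?V = "smul (smul k C) ki"
  have Pf: "P (mapS f k)" "P (mapS f ki)" using k f by (simp_all add: derivation_zero)
  have "?A + smul k (mapS f ki) = 0"
    using mapS_derivation_smul[OF f smul_finite[of k ki]] k by (simp add: mapS_derivation_sone[OF f])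
  then have "smul k (mapS f ki) = - ?A" by (simp add: eq_neg_iff_add_eq_0 add.commute)
  then have dki: "mapS f ki = - smul ki ?A"
    using smul_assoc[of ki k "mapS f ki"] k Pf by (simp add: smul_uminus_right)
  have "mapS f ?V = smul (smul (mapS f k) C) ki + smul (smul k C) (mapS f ki)"
    using k C Pf
    by (simp add: mapS_derivation_smul[OF f] smul_finite smul_add_left)
  also have "smul (smul (mapS f k) C) ki = smul ?A ?V"
    using k C Pf by (simp add: smul_assoc smul_inverse_cancel)
  also have "smul (smul k C) (mapS f ki) = - smul ?V ?A"
    using k C Pf by (simp add: dki smul_uminus_right smul_assoc)
  finally show ?thesis by (simp add: sbr_def fun_eq_iff)
qed

lemma zpow_conjugate:
  assumes "P k" "P ki"
  shows "zpow (smul (smul k (zmono A c)) ki) s = smul (smul k (zmono A (c + s))) ki"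
proof -
  let ?z = "zmono (mat 1) s"
  have "zpow (smul (smul k (zmono A c)) ki) s = smul k (smul (zmono A c) (smul ki ?z))"
    using assms by (simp add: zpow_def smul_assoc)
  also have "smul ki ?z = smul ?z ki"
    by (simp add: smul_zmono_left smul_zmono_right)
  also have "smul k (smul (zmono A c) (smul ?z ki)) = smul (smul k (zmono A (c + s))) ki"
    using assms smul_assoc[of "zmono A c" ?z ki] by (simp add: smul_assoc smul_zmono_zmono)
  finally show ?thesis .
qed

lemma conjugate_commute:
  assumes "P k" "P ki" "smul ki k = sone" "P C" "P C'" "smul C C' = smul C' C"
  shows "smul (smul (smul k C) ki) (smul (smul k C') ki) = smul (smul (smul k C') ki) (smul (smul k C) ki)"
proof -
  have "smul (smul (smul k A) ki) (smul (smul k B) ki) = smul k (smul (smul A B) ki)"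
    if "P A" "P B" for A B
    using assms(1-3) that by (simp add: smul_assoc smul_inverse_cancel)
  then show ?thesis using assms(4-6) by simp
qed

lemma wave_coefficient_eq:
  assumes k: "P k" "P ki" "smul k ki = sone" and X: "P X" and f: "derivation f"
    and comm: "\<forall>q. E0 ** delta l q = delta l q ** E0"
    and wave: "sadd (mapS f (smul k (delta l))) (smul (smul k (delta l)) (zmono E0 m))
             = smul X (smul k (delta l))"
  shows "X = smul (mapS f k) ki + zpow (smul (smul k (zmono E0 c)) ki) (m - c)"
proof -
  let ?d = "delta l" and ?E = "zmono E0 m"
  have Pf: "P (mapS f k)" using k f by (simp add: derivation_zero)
  have "mapS f (smul k ?d) = smul (mapS f k) ?d"
    using mapS_derivation_smul[OF f smul_finite[of k ?d]] k by (simp add: mapS_derivation_delta[OF f])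
  moreover have "smul ?d ?E = smul ?E ?d"
    using comm by (subst eq_commute) (simp add: zmono_commute_iff)
  then have "smul (smul k ?d) ?E = smul (smul k ?E) ?d"
    using k by (simp add: smul_assoc)
  \<comment> \<open>\<delta>(l) commutes with E0 z^m and is cancellable on the right\<close>
  ultimately have "smul (mapS f k + smul k ?E) ?d = smul (smul X k) ?d"
    using wave k X Pf by (simp add: sadd_eq_plus smul_add_left smul_finite smul_assoc)
  then have "mapS f k + smul k ?E = smul X k"
    by (rule smul_delta_cancel)
  then have "smul (mapS f k + smul k ?E) ki = X"
    using k X smul_assoc[of X k ki] by simp
  then have "X = smul (mapS f k) ki + smul (smul k ?E) ki"
    using k Pf by (simp add: smul_add_left smul_finite)
  then show ?thesis
    using k by (simp add: zpow_conjugate)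
qed

lemma mapS_conjugate_eq_sbr_coefficient:
  assumes k: "P k" "P ki" "smul k ki = sone" "smul ki k = sone" and f: "derivation f"
    and X: "X = smul (mapS f k) ki + zpow (smul (smul k (zmono C' c')) ki) s"
    and C: "C' ** C = C ** C'" "mapS f (zmono C c) = 0"
  shows "mapS f (smul (smul k (zmono C c)) ki) = sbr X (smul (smul k (zmono C c)) ki)"
proof -
  let ?V = "smul (smul k (zmono C c)) ki" and ?Z = "smul (smul k (zmono C' (c' + s))) ki"
  have "P (mapS f k)" using k f by (simp add: derivation_zero)
  then have "sbr X ?V = sbr (smul (mapS f k) ki) ?V + sbr ?Z ?V"
    unfolding X using k
    by (simp add: zpow_conjugate sbr_def fun_eq_iff smul_add_left smul_add_right smul_finite)
  moreover have "sbr ?Z ?V = 0"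
    using conjugate_commute[OF k(1,2,4), of "zmono C' (c' + s)" "zmono C c"] C(1)
    by (simp add: sbr_def fun_eq_iff smul_zmono_zmono add.commute)
  ultimately show ?thesis
    using mapS_conjugate_eq_sbr[OF k zmono_closed C(2) f] by simp
qed

end

lemma smul_mapS_G_neg:
  assumes "K \<in> G_neg" "derivation f" "\<forall>i>0. Ki i = 0" "p \<ge> 0"
  shows "smul (mapS f K) Ki p = 0"
proof (rule smul_eq_0_above[where a="- 1" and b=0])
  show "\<forall>i>- 1. mapS f K i = 0"
  proof (intro allI impI)
    fix i :: int assume "- 1 < i"
    then have "K i = mat 1 \<or> K i = 0" using assms(1) by (cases "i = 0") (auto simp: G_neg_def)
    then show "mapS f K i = 0"
      using assms(2) by (auto simp: mapS_def mapM_derivation_mat mapM_zero derivation_zero derivation_one)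
  qed
qed (use assms(3,4) in auto)

lemma smul_mapS_G_nonneg:
  assumes "K \<in> G_nonneg" "derivation f" "\<forall>i<0. Ki i = 0" "p < 0"
  shows "smul (mapS f K) Ki p = 0"
proof (rule smul_eq_0_below[where a=0 and b=0])
  show "\<forall>i<0. mapS f K i = 0"
    using assms(1,2) by (auto simp: G_nonneg_def mapS_def mapM_zero derivation_zero)
qed (use assms(3,4) in auto)

lemma pos_part_ser_bdd: "pos_part_ser M \<Longrightarrow> bdd_up M \<and> bdd_low M"
  by (auto simp: pos_part_ser_def bdd_low_def)

lemma neg_part_ser_bdd: "neg_part_ser N \<Longrightarrow> bdd_up N \<and> bdd_low N"
  by (auto simp: neg_part_ser_def bdd_up_def intro!: exI[of _ 0])

lemma pi_ge0_unique:
  fixes M A Z :: "('a::monoid_add, 'n::finite) mser"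
  assumes "\<forall>k<0. M k = 0" "M = A + Z" "\<forall>k\<ge>0. A k = 0"
  shows "M = pi_ge0 Z"
  using assms by (auto simp: pi_ge0_def fun_eq_iff)

lemma pi_lt0_unique:
  fixes N A Z :: "('a::monoid_add, 'n::finite) mser"
  assumes "\<forall>k\<ge>0. N k = 0" "N = A + Z" "\<forall>k<0. A k = 0"
  shows "N = pi_lt0 Z"
  using assms by (auto simp: pi_lt0_def fun_eq_iff)

lemma G_neg_dressing:
  fixes k X :: "('a::comm_ring_1, 'n::finite) mser"
  assumes k: "k \<in> G_neg" and f: "derivation f" and X: "bdd_up X"
    and comm: "\<forall>q. E0 ** delta l q = delta l q ** E0"
    and wave: "sadd (mapS f (smul k (delta l))) (smul (smul k (delta l)) (zmono E0 m))
             = smul X (smul k (delta l))"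
  shows "\<forall>p<0. X p = 0 \<Longrightarrow> X = pi_ge0 (zpow (smul (smul k (zmono E0 0)) (inv_up k)) m)"
    and "E0 ** C = C ** E0 \<Longrightarrow> mapS f (zmono C c) = 0 \<Longrightarrow>
           mapS f (smul (smul k (zmono C c)) (inv_up k)) = sbr X (smul (smul k (zmono C c)) (inv_up k))"
proof -
  obtain ki where ki: "\<forall>i>0. ki i = 0" "smul k ki = sone" "smul ki k = sone"
    using G_neg_inverse[OF k] by blast
  have bdd: "bdd_up k" "bdd_up ki" using k ki(1) by (auto simp: bdd_up_def G_neg_def)
  have inv: "inv_up k = ki" by (rule inv_up_eqI[OF bdd ki(2,3)])
  have X_eq: "X = smul (mapS f k) ki + zpow (smul (smul k (zmono E0 0)) ki) m"
    using up.wave_coefficient_eq[OF bdd ki(2) X f comm wave, where c=0] by simp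
  \<comment> \<open>\<partial>k k^-1 has only negative powers of z\<close>
  show "X = pi_ge0 (zpow (smul (smul k (zmono E0 0)) (inv_up k)) m)" if "\<forall>p<0. X p = 0"
    unfolding inv by (intro pi_ge0_unique[OF that X_eq]) (simp add: smul_mapS_G_neg[OF k f ki(1)])
  show "mapS f (smul (smul k (zmono C c)) (inv_up k)) = sbr X (smul (smul k (zmono C c)) (inv_up k))"
    if "E0 ** C = C ** E0" "mapS f (zmono C c) = 0"
    unfolding inv by (rule up.mapS_conjugate_eq_sbr_coefficient[OF bdd ki(2,3) f X_eq that])
qed

lemma G_nonneg_dressing:
  fixes k X :: "('a::comm_ring_1, 'n::finite) mser"
  assumes k: "k \<in> G_nonneg" and f: "derivation f" and X: "bdd_low X"
    and comm: "\<forall>q. E0 ** delta l q = delta l q ** E0"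
    and wave: "sadd (mapS f (smul k (delta l))) (smul (smul k (delta l)) (zmono E0 m))
             = smul X (smul k (delta l))"
  shows "\<forall>p\<ge>0. X p = 0 \<Longrightarrow> X = pi_lt0 (zpow (smul (smul k (zmono E0 (- 1))) (inv_low k)) (m + 1))"
    and "E0 ** C = C ** E0 \<Longrightarrow> mapS f (zmono C c) = 0 \<Longrightarrow>
           mapS f (smul (smul k (zmono C c)) (inv_low k)) = sbr X (smul (smul k (zmono C c)) (inv_low k))"
proof -
  obtain ki where ki: "\<forall>i<0. ki i = 0" "smul k ki = sone" "smul ki k = sone"
    using G_nonneg_inverse[OF k] by blast
  have bdd: "bdd_low k" "bdd_low ki" using k ki(1) by (auto simp: bdd_low_def G_nonneg_def)
  have inv: "inv_low k = ki" by (rule inv_low_eqI[OF bdd ki(2,3)])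
  have X_eq: "X = smul (mapS f k) ki + zpow (smul (smul k (zmono E0 (- 1))) ki) (m + 1)"
    using low.wave_coefficient_eq[OF bdd ki(2) X f comm wave, where c="- 1"] by simp
  show "X = pi_lt0 (zpow (smul (smul k (zmono E0 (- 1))) (inv_low k)) (m + 1))" if "\<forall>p\<ge>0. X p = 0"
    unfolding inv by (intro pi_lt0_unique[OF that X_eq]) (simp add: smul_mapS_G_nonneg[OF k f ki(1)])
  show "mapS f (smul (smul k (zmono C c)) (inv_low k)) = sbr X (smul (smul k (zmono C c)) (inv_low k))"
    if "E0 ** C = C ** E0" "mapS f (zmono C c) = 0"
    unfolding inv by (rule low.mapS_conjugate_eq_sbr_coefficient[OF bdd ki(2,3) f X_eq that])
qed

lemma comm_C_derivations_derivation:
  "comm_C_derivations emb D r \<Longrightarrow> \<alpha> \<in> {1..r} \<Longrightarrow> derivation (D m \<alpha>)"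
  by (simp add: comm_C_derivations_def derivation_def)

lemma comm_C_derivations_constant:
  assumes "comm_C_derivations emb D r" "\<alpha> \<in> {1..r}"
  shows "mapS (D m \<alpha>) (zmono (mapM emb A) c) = 0"
proof (rule mapS_derivation_constant)
  show "derivation (D m \<alpha>)" by (rule comm_C_derivations_derivation[OF assms])
  show "\<forall>c x. D m \<alpha> (emb c * x) = emb c * D m \<alpha> x"
    using assms unfolding comm_C_derivations_def by blast
qed

lemma max_comm_basis_commute:
  assumes "max_comm_basis E r" "C_algebra_emb emb" "\<alpha> \<in> {1..r}" "\<beta> \<in> {1..r}"
  shows "mapM emb (E \<alpha>) ** mapM emb (E \<beta>) = mapM emb (E \<beta>) ** mapM emb (E \<alpha>)"
  using assms by (simp add: max_comm_basis_def comm_sl_fam_def flip: mapM_C_algebra_emb_mult)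

lemma in_Delta_commute:
  assumes "in_Delta E r l" "C_algebra_emb emb" "\<alpha> \<in> {1..r}"
  shows "\<forall>q. mapM emb (E \<alpha>) ** delta l q = delta l q ** mapM emb (E \<alpha>)"
proof
  fix q
  have "smul (zmono (E \<alpha>) 0) (delta l) = smul (delta l) (zmono (E \<alpha>) 0)"
    using assms by (simp add: in_Delta_def sbr_def fun_eq_iff)
  then have "E \<alpha> ** delta l q = delta l q ** E \<alpha>"
    by (simp add: zmono_commute_iff)
  then show "mapM emb (E \<alpha>) ** delta l q = delta l q ** mapM emb (E \<alpha>)"
    using assms(2) by (metis mapM_C_algebra_emb_mult mapM_C_algebra_emb_delta)
qed

theorem proposition4p1:
  fixes emb :: "complex \<Rightarrow> 'r::comm_ring_1"
    and D :: "int \<Rightarrow> nat \<Rightarrow> 'r \<Rightarrow> 'r"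
    and r :: nat
    and E :: "nat \<Rightarrow> ((complex, 'n::{finite,linorder}) vec, 'n) vec"
    and l :: "'n \<Rightarrow> int"
    and k1 k2 :: "('r, 'n) mser"
    and M N :: "int \<Rightarrow> nat \<Rightarrow> ('r, 'n) mser"
  assumes emb: "C_algebra_emb emb"
    and der: "comm_C_derivations emb D r"
    and t: "max_comm_basis E r"
    and delta: "in_Delta E r l"
    and k1: "k1 \<in> G_neg"
    and k2: "k2 \<in> G_nonneg"
    and M: "\<And>m \<alpha>. m \<ge> 0 \<Longrightarrow> \<alpha> \<in> {1..r} \<Longrightarrow>
              pos_part_ser (M m \<alpha>)
            \<and> dwave emb D E m \<alpha> (smul k1 (delta l)) = smul (M m \<alpha>) (smul k1 (delta l))
            \<and> dwave emb D E m \<alpha> (smul k2 (delta l)) = smul (M m \<alpha>) (smul k2 (delta l))"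
    and N: "\<And>m \<beta>. m < 0 \<Longrightarrow> \<beta> \<in> {1..r} \<Longrightarrow>
              neg_part_ser (N m \<beta>)
            \<and> dwave emb D E m \<beta> (smul k1 (delta l)) = smul (N m \<beta>) (smul k1 (delta l))
            \<and> dwave emb D E m \<beta> (smul k2 (delta l)) = smul (N m \<beta>) (smul k2 (delta l))"
  defines "U \<equiv> (\<lambda>\<alpha>. smul (smul k1 (zmono (mapM emb (E \<alpha>)) 0)) (inv_up k1))"
    and "W \<equiv> (\<lambda>\<beta>. smul (smul k2 (zmono (mapM emb (E \<beta>)) (-1))) (inv_low k2))"
  shows "(\<forall>m\<ge>0. \<forall>\<alpha>\<in>{1..r}. M m \<alpha> = pi_ge0 (zpow (U \<alpha>) m))
       \<and> (\<forall>m<0. \<forall>\<beta>\<in>{1..r}. N m \<beta> = pi_lt0 (zpow (W \<beta>) (m + 1)))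
       \<and> combined_hierarchy_solution D r U W"
proof -
  note f = comm_C_derivations_derivation[OF der]
    and fc = comm_C_derivations_constant[OF der]
    and dcomm = in_Delta_commute[OF delta emb]
    and Ecomm = max_comm_basis_commute[OF t emb]
  have M_eq: "M m \<alpha> = pi_ge0 (zpow (U \<alpha>) m)" if "m \<ge> 0" "\<alpha> \<in> {1..r}" for m \<alpha>
    unfolding U_def using M[OF that] pos_part_ser_bdd
    by (intro G_neg_dressing(1)[OF k1 f[OF that(2)] _ dcomm[OF that(2)]])
       (auto simp: dwave_def pos_part_ser_def that)
  have N_eq: "N m \<beta> = pi_lt0 (zpow (W \<beta>) (m + 1))" if "m < 0" "\<beta> \<in> {1..r}" for m \<beta>
    unfolding W_def using N[OF that] neg_part_ser_bdd
    by (intro G_nonneg_dressing(1)[OF k2 f[OF that(2)] _ dcomm[OF that(2)]])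
       (auto simp: dwave_def neg_part_ser_def that)
  have U_flow: "mapS (D m \<alpha>) (U \<beta>) = sbr X (U \<beta>)"
    if "\<alpha> \<in> {1..r}" "\<beta> \<in> {1..r}" "bdd_up X"
      "dwave emb D E m \<alpha> (smul k1 (delta l)) = smul X (smul k1 (delta l))" for X m \<alpha> \<beta>
    unfolding U_def using that
    by (intro G_neg_dressing(2)[OF k1 f[OF that(1)] that(3) dcomm[OF that(1)]] Ecomm fc)
       (auto simp: dwave_def)
  have W_flow: "mapS (D m \<alpha>) (W \<beta>) = sbr X (W \<beta>)"
    if "\<alpha> \<in> {1..r}" "\<beta> \<in> {1..r}" "bdd_low X"
      "dwave emb D E m \<alpha> (smul k2 (delta l)) = smul X (smul k2 (delta l))" for X m \<alpha> \<beta>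
    unfolding W_def using that
    by (intro G_nonneg_dressing(2)[OF k2 f[OF that(1)] that(3) dcomm[OF that(1)]] Ecomm fc)
       (auto simp: dwave_def)
  have "bdd_up (M m \<alpha>)" "bdd_low (M m \<alpha>)" if "m \<ge> 0" "\<alpha> \<in> {1..r}" for m \<alpha>
    using M[OF that] pos_part_ser_bdd by auto
  moreover have "bdd_up (N m \<beta>)" "bdd_low (N m \<beta>)" if "m < 0" "\<beta> \<in> {1..r}" for m \<beta>
    using N[OF that] neg_part_ser_bdd by auto
  ultimately have "combined_hierarchy_solution D r U W"
    unfolding combined_hierarchy_solution_def
    using M N by (auto simp flip: M_eq N_eq intro!: U_flow W_flow)
  then show ?thesis using M_eq N_eq by blast
qed

end
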